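(* Let $L\in\{2,3,4\}$, $\sigma$ the ReLU, and $\mathbf A$ the matrix whose columns are all deep narrow features $f^L_{\mathbf s,\mathbf j,k}(\mathbf X)$, $(\mathbf s,\mathbf j,k)\in\mathcal M$. Then the optimal value $\|\mathbf z^*\|_1$ of the minimum-norm problem $\min_{\mathbf z,\xi}\|\mathbf z\|_1$ subject to $\mathbf A\mathbf z+\xi\mathbf 1=\mathbf y$ is at least $\max_{n\in[N-1]}|\mathrm{s}_n|$, where $\mathrm{s}_n=\frac{y_n-y_{n+1}}{x_n-x_{n+1}}$.
   Context: Data $x_1>\cdots>x_N$ real ($N\ge2$), $\mathbf X=(x_1,\dots,x_N)^T$, $\mathbf y\in\mathbb R^N$, $\xi\in\mathbb R$ free, $[n]=\{1,\dots,n\}$. Ramps: $r^+_{a}(x)=(x-a)_+$, $r^-_a(x)=(a-x)_+$. For $a_1\in[-\infty,\infty)$, $a_2\in(-\infty,\infty]$ with $a_1\le a_2$: $r^+_{a_1,a_2}(x)=0$ for $x\le a_1$, $x-a_1$ for $a_1\le x\le a_2$, $a_2-a_1$ for $x\ge a_2$; $r^-_{a_1,a_2}(x)=a_2-a_1$ for $x\le a_1$, $a_2-x$ for $a_1\le x\le a_2$, $0$ for $x\ge a_2$; if $a_1>a_2$ both are $0$. Index set $\mathcal M=\{-1,1\}^{L-1}\times[N]^{L-1}\times\mathcal M^{(3)}$ with $\mathcal M^{(3)}=\{0\}$ if $L<4$ and $\{0,1\}$ if $L=4$. For $(\mathbf s,\mathbf j,k)\in\mathcal M$ let $a_1=x_{j_1}$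 if $k=0$, $a_1=2x_{j_2}-x_{j_1}$ if $k=1$. Then $f^L_{\mathbf s,\mathbf j,k}$ is: $L=2$: $(x_{j_1}-x)_+$ if $s_1=-1$, $(x-x_{j_1})_+$ if $s_1=1$. $L=3$: if $s_2=1$: $r^-_{\min\{x_{j_1},x_{j_2}\}}$ ($s_1=-1$), $r^+_{\max\{x_{j_1},x_{j_2}\}}$ ($s_1=1$); if $s_2=-1$: $r^+_{x_{j_2},x_{j_1}}$ ($s_1=-1$), $r^-_{x_{j_1},x_{j_2}}$ ($s_1=1$). $L=4$: if $s_2=s_3=1$: $r^-_{\min\{a_1,x_{j_2},x_{j_3}\}}$ ($s_1=-1$), $r^+_{\max\{a_1,x_{j_2},x_{j_3}\}}$ ($s_1=1$); if $s_2=1,s_3=-1$: $r^+_{x_{j_3},\min\{a_1,x_{j_2}\}}$ ($s_1=-1$), $r^-_{\max\{a_1,x_{j_2}\},x_{j_3}}$ ($s_1=1$); if $s_2=-1,s_3=1$: $r^+_{\max\{x_{j_2},x_{j_3}\},a_1}$ ($s_1=-1$), $r^-_{a_1,\min\{x_{j_2},x_{j_3}\}}$ ($s_1=1$); if $s_2=s_3=-1$: $r^-_{x_{j_2},\min\{a_1,x_{j_3}\}}$ ($s_1=-1$), $r^+_{\max\{a_1,x_{j_3}\},x_{j_2}}$ ($s_1=1$). The corresponding column is $f^L_{\mathbf s,\mathbf j,k}(\mathbf X)\in\mathbb R^N$ (entrywise evaluation). *)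

theory Defs
  imports "HOL-Analysis.Analysis"
begin

text \<open>Ramps. Single-breakpoint ramps r^+_a, r^-_a and two-breakpoint ramps
  r^+_{a1,a2}, r^-_{a1,a2} (only finite breakpoints occur in the features).\<close>

definition rp :: "real \<Rightarrow> real \<Rightarrow> real" where
  "rp a x = max (x - a) 0"

definition rm :: "real \<Rightarrow> real \<Rightarrow> real" where
  "rm a x = max (a - x) 0"

definition rp2 :: "real \<Rightarrow> real \<Rightarrow> real \<Rightarrow> real" where
  "rp2 a1 a2 x = (if a1 > a2 then 0 else
                  if x \<le> a1 then 0 else if x \<le> a2 then x - a1 else a2 - a1)"

definition rm2 :: "real \<Rightarrow> real \<Rightarrow> real \<Rightarrow> real" where
  "rm2 a1 a2 x = (if a1 > a2 then 0 else
                  if x \<le> a1 then a2 - a1 else if x \<le> a2 then a2 - x else 0)"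

text \<open>Index set M. s and j are lists of length L-1 (s!0 = s_1, j!0 = j_1, ...).\<close>

definition idxM :: "nat \<Rightarrow> nat \<Rightarrow> (int list \<times> nat list \<times> nat) set" where
  "idxM L N = {(s, j, k). length s = L - 1 \<and> set s \<subseteq> {-1, 1}
               \<and> length j = L - 1 \<and> set j \<subseteq> {1..N}
               \<and> k \<in> (if L < 4 then {0} else {0, 1})}"

definition feat :: "nat \<Rightarrow> (nat \<Rightarrow> real) \<Rightarrow> int list \<Rightarrow> nat list \<Rightarrow> nat \<Rightarrow> real \<Rightarrow> real" where
  "feat L xs s j k t =
    (let s1 = s ! 0; s2 = s ! 1; s3 = s ! 2;
         x1 = xs (j ! 0); x2 = xs (j ! 1); x3 = xs (j ! 2);
         a1 = (if k = 0 then x1 else 2 * x2 - x1)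
     in if L = 2 then (if s1 = -1 then rm x1 t else rp x1 t)
     else if L = 3 then
       (if s2 = 1 then (if s1 = -1 then rm (min x1 x2) t else rp (max x1 x2) t)
        else (if s1 = -1 then rp2 x2 x1 t else rm2 x1 x2 t))
     else
       (if s2 = 1 \<and> s3 = 1 then
          (if s1 = -1 then rm (min a1 (min x2 x3)) t else rp (max a1 (max x2 x3)) t)
        else if s2 = 1 \<and> s3 = -1 then
          (if s1 = -1 then rp2 x3 (min a1 x2) t else rm2 (max a1 x2) x3 t)
        else if s2 = -1 \<and> s3 = 1 then
          (if s1 = -1 then rp2 (max x2 x3) a1 t else rm2 a1 (min x2 x3) t)
        else
          (if s1 = -1 then rm2 x2 (min a1 x3) t else rp2 (max a1 x3) x2 t)))"

end

theory Submission
  imports Defs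
begin

text \<open>Every feature is built from ramps and case distinctions on its parameters, so as a
  function of the input it is 1-Lipschitz. Hence the fitted function
  t \<mapsto> \<Sum>m. z m * f m t + \<xi> is Lipschitz with constant \<Sum>m. \<bar>z m\<bar>, and this constant
  bounds every slope of the data it interpolates.\<close>

lemma lipschitz_on_sum:
  fixes f :: "'i \<Rightarrow> 'a::metric_space \<Rightarrow> 'b::real_normed_vector"
  assumes "\<And>i. i \<in> I \<Longrightarrow> (C i)-lipschitz_on U (f i)"
  shows "(\<Sum>i\<in>I. C i)-lipschitz_on U (\<lambda>x. \<Sum>i\<in>I. f i x)"
proof (cases "finite I")
  case True
  then show ?thesis
    using assms
  proof (induction I rule: finite_induct)
    case empty
    show ?case by (simp add: lipschitz_on_constant)
  next
    case (insert i I)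
    then show ?case by (simp add: lipschitz_on_add)
  qed
next
  case False
  then show ?thesis by (simp add: lipschitz_on_constant)
qed

lemma lipschitz_on_if:
  "C-lipschitz_on U f \<Longrightarrow> C-lipschitz_on U g \<Longrightarrow> C-lipschitz_on U (\<lambda>x. if b then f x else g x)"
  by (cases b) simp_all

lemma abs_slope_le_lipschitz:
  fixes g :: "real \<Rightarrow> real"
  assumes "C-lipschitz_on U g" "t \<in> U" "u \<in> U"
  shows "\<bar>(g t - g u) / (t - u)\<bar> \<le> C"
proof (cases "t = u")
  case True
  then show ?thesis using lipschitz_on_nonneg[OF assms(1)] by simp
next
  case False
  have "\<bar>g t - g u\<bar> \<le> C * \<bar>t - u\<bar>"
    using lipschitz_onD[OF assms] by (simp add: dist_real_def)
  with False show ?thesis by (simp add: abs_divide divide_le_eq)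
qed

lemma lipschitz_on_rp: "1-lipschitz_on U (rp a)"
  by (rule lipschitz_onI) (auto simp: rp_def dist_real_def)

lemma lipschitz_on_rm: "1-lipschitz_on U (rm a)"
  by (rule lipschitz_onI) (auto simp: rm_def dist_real_def)

lemma lipschitz_on_rp2: "1-lipschitz_on U (rp2 a b)"
  by (rule lipschitz_onI) (auto simp: rp2_def dist_real_def)

lemma lipschitz_on_rm2: "1-lipschitz_on U (rm2 a b)"
  by (rule lipschitz_onI) (auto simp: rm2_def dist_real_def)

lemma lipschitz_on_feat: "1-lipschitz_on U (feat L xs s j k)"
  unfolding feat_def[abs_def] Let_def
  by (intro lipschitz_on_if lipschitz_on_rp lipschitz_on_rm lipschitz_on_rp2 lipschitz_on_rm2)

theorem lemma5:
  fixes L N :: nat and x y :: "nat \<Rightarrow> real"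
    and z :: "int list \<times> nat list \<times> nat \<Rightarrow> real" and \<xi> :: real
  assumes "L \<in> {2, 3, 4}"
    and "N \<ge> 2"
    and "\<And>i. 1 \<le> i \<Longrightarrow> i < N \<Longrightarrow> x i > x (i + 1)"
    and feasible: "\<And>i. i \<in> {1..N} \<Longrightarrow>
          (\<Sum>m\<in>idxM L N. z m * feat L x (fst m) (fst (snd m)) (snd (snd m)) (x i)) + \<xi> = y i"
  shows "(\<Sum>m\<in>idxM L N. \<bar>z m\<bar>)
           \<ge> (MAX n\<in>{1..N-1}. \<bar>(y n - y (n + 1)) / (x n - x (n + 1))\<bar>)"
proof (rule Max.boundedI)
  define g where
    "g t = (\<Sum>m\<in>idxM L N. z m * feat L x (fst m) (fst (snd m)) (snd (snd m)) t) + \<xi>" for t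
  have "((\<Sum>m\<in>idxM L N. \<bar>z m\<bar> * 1) + 0)-lipschitz_on UNIV g"
    unfolding g_def
    by (intro lipschitz_on_add lipschitz_on_sum lipschitz_on_cmult_real lipschitz_on_feat
        lipschitz_on_constant)
  then have g_lipschitz: "(\<Sum>m\<in>idxM L N. \<bar>z m\<bar>)-lipschitz_on UNIV g" by simp
  fix v assume "v \<in> (\<lambda>n. \<bar>(y n - y (n + 1)) / (x n - x (n + 1))\<bar>) ` {1..N-1}"
  then obtain n where "n \<in> {1..N-1}" and v: "v = \<bar>(y n - y (n + 1)) / (x n - x (n + 1))\<bar>"
    by blast
  then have "y n = g (x n)" "y (n + 1) = g (x (n + 1))"
    using feasible[of n] feasible[of "n + 1"] by (auto simp: g_def)
  then show "v \<le> (\<Sum>m\<in>idxM L N. \<bar>z m\<bar>)"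
    unfolding v using abs_slope_le_lipschitz[OF g_lipschitz] by simp
qed (use \<open>N \<ge> 2\<close> in simp_all)

end
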